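(* Let $k$ be a field, $(C,\Delta)$ a coassociative coalgebra, $(L,\phi)$ a Lie algebra and $B$ a Lie module over $L$ via $\psi$. For every $n\ge0$ and $f\in Alt^n(L,B)$ with induced map $F$, one has $\delta(\delta F)=0$, where $\delta F$ is regarded as the map induced by $df$ and $\delta$ is applied again by the same formula (with $df$ in place of $f$). Thus $(TDalt^\bullet(Hom(C,L),Hom(C,B)),\delta)$ is a cochain complex.
   Context: Iterated coproduct $\Delta^{(m-1)}:C\to C^{\otimes m}$, written $\sum c_{(1)}\otimes\dots\otimes c_{(m)}$. $S_m$ acts on $m$-fold tensor products by $\sigma(x_1\otimes\dots\otimes x_m)=x_{\sigma(1)}\otimes\dots\otimes x_{\sigma(m)}$. For $\chi:X_1\otimes\dots\otimes X_m\to Y$ the induced map is $f_1\otimes\dots\otimes f_m\mapsto\chi\circ(f_1\otimes\dots\otimes f_m)\circ\Delta^{(m-1)}$. $Alt^n(L,B)$: skew symmetric linear maps $L^{\otimes n}\to B$, $Alt^0(L,B)=B$; $df(x_1,\dots,x_{n+1})=\sum_{i}(-1)^{i+1}\psi(x_i,f(x_1,\dots,\hat{x_i},\dots,x_{n+1}))+\sum_{j<k}(-1)^{j+k}f(\phi(x_j,x_k),x_1,\dots,\hat{x_j},\dots,\hat{x_k},\dots,x_{n+1})$. $TDalt^n$: TD skew maps $Hom(C,L)^{\otimes n}\to Hom(C,B)$, where $G$ induced by $\chi$ is TD skew if $G\circ\sigma=(-1)^\sigma G^{\sigma^{-1}}$ with $G^\sigma(f_1\otimes\dots\otimes f_m)=\chi\circ(f_1\otimes\dots\otimes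 f_m)\circ\sigma\circ\Delta^{(m-1)}$. With $\Phi,\Psi,F$ induced by $\phi,\psi,f$: $(\Psi\circ(1\otimes F))^{\sigma}(g_1\otimes\dots\otimes g_{n+1})(c)=\sum\psi(g_1(c_{(\sigma(1))}),f(g_2(c_{(\sigma(2))})\otimes\dots\otimes g_{n+1}(c_{(\sigma(n+1))})))$, $(F\circ(\Phi\otimes1))^{\sigma}(g_1\otimes\dots\otimes g_{n+1})(c)=\sum f(\phi(g_1(c_{(\sigma(1))}),g_2(c_{(\sigma(2))}))\otimes g_3(c_{(\sigma(3))})\otimes\dots\otimes g_{n+1}(c_{(\sigma(n+1))}))$, and $\delta F=\sum_{\sigma}(-1)^{\sigma}(\Psi\circ(1\otimes F))^{\sigma}\circ\sigma-\sum_{\sigma'}(-1)^{\sigma'}(F\circ(\Phi\otimes1))^{\sigma'}\circ\sigma'$, $\sigma$ over $(1,n)$-unshuffles and $\sigma'$ over $(2,n-1)$-unshuffles ($\sigma\in S_{p+q}$ with $\sigma(1)<\dots<\sigma(p)$, $\sigma(p+1)<\dots<\sigma(p+q)$), $\sigma$ acting on $Hom(C,L)^{\otimes(n+1)}$ by permuting factors; for $n=0$, $(\delta F)(g)(c)=\psi(g(c),f)$. *)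

theory Defs
  imports Main "HOL.Vector_Spaces" "HOL-Combinatorics.Permutations"
begin

text \<open>Lists are 0-indexed. A (multi)linear map on an n-fold tensor
  product is represented by the corresponding multilinear map on lists of length n.
  An element of C tensor C is represented by a finite list of pairs (a,b) meaning
  the sum of a tensor b; equality of tensors is tested against all k-valued bilinear
  (trilinear) forms, which characterises equality in tensor products of vector spaces.\<close>

definition multilinear_on ::
  "('k::field \<Rightarrow> 'v::ab_group_add \<Rightarrow> 'v) \<Rightarrow> ('k \<Rightarrow> 'w::ab_group_add \<Rightarrow> 'w) \<Rightarrow> nat \<Rightarrow> ('v list \<Rightarrow> 'w) \<Rightarrow> bool"
  where "multilinear_on sV sW n f \<longleftrightarrow>
     (\<forall>xs i. length xs = n \<longrightarrow> i < n \<longrightarrow> Vector_Spaces.linear sV sW (\<lambda>v. f (xs[i := v])))"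

definition bilinear_map ::
  "('k::field \<Rightarrow> 'u::ab_group_add \<Rightarrow> 'u) \<Rightarrow> ('k \<Rightarrow> 'v::ab_group_add \<Rightarrow> 'v) \<Rightarrow> ('k \<Rightarrow> 'w::ab_group_add \<Rightarrow> 'w)
    \<Rightarrow> ('u \<Rightarrow> 'v \<Rightarrow> 'w) \<Rightarrow> bool"
  where "bilinear_map sU sV sW h \<longleftrightarrow>
     (\<forall>a. Vector_Spaces.linear sV sW (h a)) \<and> (\<forall>b. Vector_Spaces.linear sU sW (\<lambda>a. h a b))"

definition trilinear_form ::
  "('k::field \<Rightarrow> 'c::ab_group_add \<Rightarrow> 'c) \<Rightarrow> ('c \<Rightarrow> 'c \<Rightarrow> 'c \<Rightarrow> 'k) \<Rightarrow> bool"
  where "trilinear_form sC h \<longleftrightarrow>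
     (\<forall>a b. Vector_Spaces.linear sC (*) (h a b)) \<and> (\<forall>a c. Vector_Spaces.linear sC (*) (\<lambda>b. h a b c))
     \<and> (\<forall>b c. Vector_Spaces.linear sC (*) (\<lambda>a. h a b c))"

definition teval2 :: "('c \<Rightarrow> 'c \<Rightarrow> 'y::comm_monoid_add) \<Rightarrow> ('c \<times> 'c) list \<Rightarrow> 'y"
  where "teval2 h T = sum_list (map (\<lambda>(a, b). h a b) T)"

definition coassoc_coalgebra ::
  "('k::field \<Rightarrow> 'c::ab_group_add \<Rightarrow> 'c) \<Rightarrow> ('c \<Rightarrow> ('c \<times> 'c) list) \<Rightarrow> bool"
  where "coassoc_coalgebra sC Delta \<longleftrightarrow>
     vector_space sC \<and>
     (\<forall>h. bilinear_map sC sC (*) h \<longrightarrow>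
        (\<forall>s x y. teval2 h (Delta (sC s x + y)) = s * teval2 h (Delta x) + teval2 h (Delta y))) \<and>
     (\<forall>h. trilinear_form sC h \<longrightarrow>
        (\<forall>c. teval2 (\<lambda>a b. teval2 (\<lambda>a1 a2. h a1 a2 b) (Delta a)) (Delta c)
            = teval2 (\<lambda>a b. teval2 (\<lambda>b1 b2. h a b1 b2) (Delta b)) (Delta c)))"

text \<open>Iterated coproduct Delta^(m) : C \<rightarrow> C^(m+1), as a list of (m+1)-tuples (lists),
  Delta^(0) = id, Delta^(m+1) = (Delta \<otimes> 1^(m)) \<circ> Delta^(m).\<close>
fun iter_cop :: "('c \<Rightarrow> ('c \<times> 'c) list) \<Rightarrow> nat \<Rightarrow> 'c \<Rightarrow> 'c list list" where
  "iter_cop Delta 0 c = [[c]]"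
| "iter_cop Delta (Suc m) c =
     concat (map (\<lambda>t. map (\<lambda>(a, b). a # b # tl t) (Delta (hd t))) (iter_cop Delta m c))"

definition lie_algebra :: "('k::field \<Rightarrow> 'l::ab_group_add \<Rightarrow> 'l) \<Rightarrow> ('l \<Rightarrow> 'l \<Rightarrow> 'l) \<Rightarrow> bool"
  where "lie_algebra sL phi \<longleftrightarrow> vector_space sL \<and> bilinear_map sL sL sL phi \<and>
     (\<forall>x. phi x x = 0) \<and>
     (\<forall>x y z. phi x (phi y z) + phi y (phi z x) + phi z (phi x y) = 0)"

definition lie_module ::
  "('k::field \<Rightarrow> 'l::ab_group_add \<Rightarrow> 'l) \<Rightarrow> ('l \<Rightarrow> 'l \<Rightarrow> 'l) \<Rightarrow> ('k \<Rightarrow> 'b::ab_group_add \<Rightarrow> 'b)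
     \<Rightarrow> ('l \<Rightarrow> 'b \<Rightarrow> 'b) \<Rightarrow> bool"
  where "lie_module sL phi sB psi \<longleftrightarrow> vector_space sB \<and> bilinear_map sL sB sB psi \<and>
     (\<forall>x y b. psi (phi x y) b = psi x (psi y b) - psi y (psi x b))"

text \<open>Alt^n(L,B): skew symmetric (multi)linear maps L^(\<otimes>n) \<rightarrow> B; Alt^0(L,B) = B
  (represented by the value on the empty list).\<close>
definition Alt ::
  "('k::field \<Rightarrow> 'l::ab_group_add \<Rightarrow> 'l) \<Rightarrow> ('k \<Rightarrow> 'b::ab_group_add \<Rightarrow> 'b) \<Rightarrow> nat \<Rightarrow> ('l list \<Rightarrow> 'b) set"
  where "Alt sL sB n = {f. multilinear_on sL sB n f \<and>
     (\<forall>xs \<sigma>. length xs = n \<longrightarrow> \<sigma> permutes {..<n} \<longrightarrow>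
        f (permute_list \<sigma> xs) = sB (of_int (sign \<sigma>)) (f xs))}"

text \<open>Chevalley--Eilenberg differential d : Alt^n \<rightarrow> Alt^(n+1) (0-indexed version).\<close>
definition CE_d ::
  "('k::field \<Rightarrow> 'b::ab_group_add \<Rightarrow> 'b) \<Rightarrow> ('l \<Rightarrow> 'l \<Rightarrow> 'l) \<Rightarrow> ('l \<Rightarrow> 'b \<Rightarrow> 'b)
     \<Rightarrow> nat \<Rightarrow> ('l list \<Rightarrow> 'b) \<Rightarrow> 'l list \<Rightarrow> 'b"
  where "CE_d sB phi psi n f xs =
     (\<Sum>i<n+1. sB ((-1) ^ i) (psi (xs ! i) (f (nths xs (- {i})))))
   + (\<Sum>(j, k)\<in>{(j, k). j < k \<and> k < n+1}.
        sB ((-1) ^ (j + k)) (f (phi (xs ! j) (xs ! k) # nths xs (- {j, k}))))"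

definition unshuffles :: "nat \<Rightarrow> nat \<Rightarrow> (nat \<Rightarrow> nat) set"
  where "unshuffles p q = {\<sigma>. \<sigma> permutes {..<p+q} \<and>
     strict_mono_on {..<p} \<sigma> \<and> strict_mono_on {p..<p+q} \<sigma>}"

text \<open>Action of a permutation on Hom(C,L)^(\<otimes>m) on pure tensors:
  sigma(g_1 \<otimes> ... \<otimes> g_m) = g_sigma(1) \<otimes> ... \<otimes> g_sigma(m).\<close>
definition act :: "(nat \<Rightarrow> nat) \<Rightarrow> 'a list \<Rightarrow> 'a list"
  where "act \<sigma> gs = permute_list \<sigma> gs"

text \<open>(Psi \<circ> (1 \<otimes> F))^sigma on pure tensors g_1 \<otimes> ... \<otimes> g_m (m = n+1).\<close>
definition PsiF_sup ::
  "('c \<Rightarrow> ('c \<times> 'c) list) \<Rightarrow> ('l \<Rightarrow> 'b \<Rightarrow> 'b) \<Rightarrow> ('l list \<Rightarrow> 'b) \<Rightarrow> nat \<Rightarrow> (nat \<Rightarrow> nat)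
     \<Rightarrow> ('c \<Rightarrow> 'l) list \<Rightarrow> 'c \<Rightarrow> 'b::comm_monoid_add"
  where "PsiF_sup Delta psi f m \<sigma> gs c =
     sum_list (map (\<lambda>t. psi ((gs ! 0) (t ! \<sigma> 0)) (f (map (\<lambda>i. (gs ! i) (t ! \<sigma> i)) [1..<m])))
       (iter_cop Delta (m - 1) c))"

text \<open>(F \<circ> (Phi \<otimes> 1))^sigma on pure tensors g_1 \<otimes> ... \<otimes> g_m (m = n+1).\<close>
definition FPhi_sup ::
  "('c \<Rightarrow> ('c \<times> 'c) list) \<Rightarrow> ('l \<Rightarrow> 'l \<Rightarrow> 'l) \<Rightarrow> ('l list \<Rightarrow> 'b) \<Rightarrow> nat \<Rightarrow> (nat \<Rightarrow> nat)
     \<Rightarrow> ('c \<Rightarrow> 'l) list \<Rightarrow> 'c \<Rightarrow> 'b::comm_monoid_add"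
  where "FPhi_sup Delta phi f m \<sigma> gs c =
     sum_list (map (\<lambda>t. f (phi ((gs ! 0) (t ! \<sigma> 0)) ((gs ! 1) (t ! \<sigma> 1))
                           # map (\<lambda>i. (gs ! i) (t ! \<sigma> i)) [2..<m]))
       (iter_cop Delta (m - 1) c))"

text \<open>delta F for F induced by f \<in> Alt^n, evaluated on g_1 \<otimes> ... \<otimes> g_(n+1) at c.\<close>
definition TD_delta ::
  "('k::field \<Rightarrow> 'b::ab_group_add \<Rightarrow> 'b) \<Rightarrow> ('c \<Rightarrow> ('c \<times> 'c) list) \<Rightarrow> ('l \<Rightarrow> 'l \<Rightarrow> 'l)
     \<Rightarrow> ('l \<Rightarrow> 'b \<Rightarrow> 'b) \<Rightarrow> nat \<Rightarrow> ('l list \<Rightarrow> 'b) \<Rightarrow> ('c \<Rightarrow> 'l) list \<Rightarrow> 'c \<Rightarrow> 'b"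
  where "TD_delta sB Delta phi psi n f gs c =
     (if n = 0 then psi ((gs ! 0) c) (f [])
      else (\<Sum>\<sigma>\<in>unshuffles 1 n. sB (of_int (sign \<sigma>)) (PsiF_sup Delta psi f (n+1) \<sigma> (act \<sigma> gs) c))
         - (\<Sum>\<sigma>\<in>unshuffles 2 (n-1). sB (of_int (sign \<sigma>)) (FPhi_sup Delta phi f (n+1) \<sigma> (act \<sigma> gs) c)))"

end

theory Submission
  imports Defs
begin

(* Evaluated on g_1, ..., g_(n+2) at c, both sums in delta run over unshuffles, and an unshuffle
   is determined by its first one or two values.  Reindexing by these positions shows that delta G
   sends g_1, ..., g_(n+2) and c to the sum, over the terms t of the iterated coproduct of c, of the
   Chevalley-Eilenberg differential dG evaluated at (g_1 t_1, ..., g_(n+2) t_(n+2)).  Hence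
   delta (delta F) is computed by d (d f), which vanishes: in its expansion the terms psi x (psi y _)
   cancel against psi [x,y] _ by the module law, the two kinds of terms psi x (f ([y,z], ...))
   cancel by their signs, the nested brackets cancel by the Jacobi identity, and the pairs of
   disjoint brackets cancel by skew symmetry of f. *)

section \<open>Deleting entries from a list\<close>

definition rank_compl :: "nat set \<Rightarrow> nat \<Rightarrow> nat" where
  "rank_compl S c = card {i. i \<notin> S \<and> i < c}"

lemma rank_compl_strict_mono: "c < d \<Longrightarrow> c \<notin> S \<Longrightarrow> rank_compl S c < rank_compl S d"
  unfolding rank_compl_def
  by (rule psubset_card_mono) (auto intro: finite_subset[of _ "{..<d}"])

lemma rank_compl_less_iff:
  "c \<notin> S \<Longrightarrow> d \<notin> S \<Longrightarrow> rank_compl S c < rank_compl S d \<longleftrightarrow> c < d"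
  by (metis linorder_neq_iff order_less_asym rank_compl_strict_mono)

lemma rank_compl_eq_iff:
  "c \<notin> S \<Longrightarrow> d \<notin> S \<Longrightarrow> rank_compl S c = rank_compl S d \<longleftrightarrow> c = d"
  by (metis linorder_neq_iff order_less_irrefl rank_compl_strict_mono)

lemma rank_compl_add_card: "rank_compl S c + card {s\<in>S. s < c} = c"
proof -
  have "{..<c} = {i. i \<notin> S \<and> i < c} \<union> {s\<in>S. s < c}" by auto
  then have "card {..<c} = card {i. i \<notin> S \<and> i < c} + card {s\<in>S. s < c}"
    by (simp add: card_Un_disjoint disjoint_iff)
  then show ?thesis by (simp add: rank_compl_def)
qed

lemma rank_compl_singleton: "rank_compl {a} c + (if a < c then 1 else 0) = c"
proof -
  have "{s\<in>{a}. s < c} = (if a < c then {a} else {})" by auto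
  then have "card {s\<in>{a}. s < c} = (if a < c then 1 else 0)" by simp
  then show ?thesis using rank_compl_add_card[of "{a}" c] by simp
qed

lemma rank_compl_pair:
  "a \<noteq> b \<Longrightarrow> rank_compl {a,b} c + (if a < c then 1 else 0) + (if b < c then 1 else 0) = c"
proof -
  assume "a \<noteq> b"
  moreover have "{s\<in>{a,b}. s < c} = (if a < c then {a} else {}) \<union> (if b < c then {b} else {})"
    by auto
  ultimately have "card {s\<in>{a,b}. s < c} = (if a < c then 1 else 0) + (if b < c then 1 else 0)"
    by auto
  then show ?thesis using rank_compl_add_card[of "{a,b}" c] by simp
qed

lemma length_nths_compl: "length (nths xs (-S)) = card {c. c < length xs \<and> c \<notin> S}"
  by (simp add: length_nths)

lemma length_nths_compl_subset:
  "S \<subseteq> {..<length xs} \<Longrightarrow> length (nths xs (-S)) = length xs - card S"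
proof -
  assume S: "S \<subseteq> {..<length xs}"
  have "{c. c < length xs \<and> c \<notin> S} = {..<length xs} - S" by auto
  then show ?thesis using S by (simp add: length_nths_compl card_Diff_subset finite_subset)
qed

lemma nth_nths_card:
  assumes "c < length xs" "c \<in> A"
  shows "nths xs A ! card {i\<in>A. i < c} = xs ! c"
proof -
  have xs: "xs = take c xs @ (xs ! c # drop (Suc c) xs)"
    using assms(1) by (simp add: Cons_nth_drop_Suc)
  have len: "length (nths (take c xs) A) = card {i\<in>A. i < c}"
    using assms(1) by (simp add: length_nths min_def conj_commute)
  have "nths xs A = nths (take c xs) A @ (xs ! c # nths (drop (Suc c) xs) {j. Suc j + c \<in> A})"
    using assms by (subst xs) (simp add: nths_append nths_Cons min_def)
  then show ?thesis using len by (simp add: nth_append)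
qed

lemma nth_nths_rank_compl:
  "c < length xs \<Longrightarrow> c \<notin> S \<Longrightarrow> nths xs (-S) ! rank_compl S c = xs ! c"
  using nth_nths_card[of c xs "-S"] by (simp add: rank_compl_def)

lemma nths_nths_rank_compl:
  assumes "T \<inter> S = {}"
  shows "nths (nths xs (-S)) (-(rank_compl S ` T)) = nths xs (-(S \<union> T))"
proof -
  have "{i \<in> -S. \<exists>j \<in> -(rank_compl S ` T). card {i' \<in> -S. i' < i} = j} = -(S \<union> T)"
    using assms rank_compl_eq_iff unfolding rank_compl_def[symmetric] Compl_iff
    by (fastforce simp: rank_compl_def)
  then show ?thesis by (simp add: nths_nths)
qed

lemma bij_betw_rank_compl:
  "bij_betw (rank_compl S) {c. c < length xs \<and> c \<notin> S} {..<length (nths xs (-S))}"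
proof -
  let ?A = "{c. c < length xs \<and> c \<notin> S}"
  have inj: "inj_on (rank_compl S) ?A" by (auto simp: inj_on_def rank_compl_eq_iff)
  have "rank_compl S ` ?A \<subseteq> {..<card ?A}"
  proof
    fix y assume "y \<in> rank_compl S ` ?A"
    then obtain c where c: "c \<in> ?A" "y = rank_compl S c" by auto
    have "{i. i \<notin> S \<and> i < c} \<subset> ?A" using c by auto
    then have "card {i. i \<notin> S \<and> i < c} < card ?A" by (rule psubset_card_mono[rotated]) simp
    then show "y \<in> {..<card ?A}" using c by (simp add: rank_compl_def)
  qed
  moreover have "card (rank_compl S ` ?A) = card ?A" using inj by (simp add: card_image)
  ultimately have "rank_compl S ` ?A = {..<card ?A}"
    by (metis card_lessThan card_subset_eq finite_lessThan)
  then show ?thesis using inj by (simp add: bij_betw_def length_nths_compl)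
qed

lemma sum_positions_nths_compl:
  "(\<Sum>i<length (nths xs (-S)). F i (nths xs (-S) ! i) (nths (nths xs (-S)) (-{i})))
   = (\<Sum>c | c < length xs \<and> c \<notin> S. F (rank_compl S c) (xs ! c) (nths xs (-insert c S)))"
proof -
  have "(\<Sum>i<length (nths xs (-S)). F i (nths xs (-S) ! i) (nths (nths xs (-S)) (-{i})))
    = (\<Sum>c | c < length xs \<and> c \<notin> S. F (rank_compl S c) (nths xs (-S) ! rank_compl S c)
         (nths (nths xs (-S)) (-{rank_compl S c})))"
    by (rule sum.reindex_bij_betw[symmetric, OF bij_betw_rank_compl])
  also have "\<dots> = (\<Sum>c | c < length xs \<and> c \<notin> S. F (rank_compl S c) (xs ! c) (nths xs (-insert c S)))"
    using nths_nths_rank_compl[of "{_}" S xs] by (intro sum.cong) (auto simp: nth_nths_rank_compl)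
  finally show ?thesis .
qed

lemma sum_pairs_nths_compl:
  "(\<Sum>(j,k) | j < k \<and> k < length (nths xs (-S)).
      F j k (nths xs (-S) ! j) (nths xs (-S) ! k) (nths (nths xs (-S)) (-{j,k})))
   = (\<Sum>(c,d) | c < d \<and> d < length xs \<and> c \<notin> S \<and> d \<notin> S.
      F (rank_compl S c) (rank_compl S d) (xs ! c) (xs ! d) (nths xs (-insert c (insert d S))))"
proof -
  let ?r = "rank_compl S"
  let ?A = "{c. c < length xs \<and> c \<notin> S}"
  let ?P = "{(c,d). c < d \<and> d < length xs \<and> c \<notin> S \<and> d \<notin> S}"
  let ?Q = "{(j,k). j < k \<and> k < length (nths xs (-S))}"
  have img: "?r ` ?A = {..<length (nths xs (-S))}"
    using bij_betw_rank_compl[of S xs] by (simp add: bij_betw_def)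
  have "(\<lambda>(c,d). (?r c, ?r d)) ` ?P = ?Q"
  proof
    show "(\<lambda>(c,d). (?r c, ?r d)) ` ?P \<subseteq> ?Q"
      using img by (force simp: rank_compl_strict_mono)
    show "?Q \<subseteq> (\<lambda>(c,d). (?r c, ?r d)) ` ?P"
    proof clarify
      fix j k assume jk: "j < k" "k < length (nths xs (-S))"
      obtain c d where "c \<in> ?A" "?r c = j" "d \<in> ?A" "?r d = k"
        using jk img by (metis (no_types, lifting) imageE lessThan_iff order.strict_trans)
      then show "(j, k) \<in> (\<lambda>(c,d). (?r c, ?r d)) ` ?P"
        using jk rank_compl_less_iff[of c S d] by (auto simp: image_iff)
    qed
  qed
  moreover have "inj_on (\<lambda>(c,d). (?r c, ?r d)) ?P" by (auto simp: inj_on_def rank_compl_eq_iff)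
  ultimately have "bij_betw (\<lambda>(c,d). (?r c, ?r d)) ?P ?Q" by (simp add: bij_betw_def)
  then have "(\<Sum>(j,k)\<in>?Q. F j k (nths xs (-S) ! j) (nths xs (-S) ! k) (nths (nths xs (-S)) (-{j,k})))
    = (\<Sum>(c,d)\<in>?P. F (?r c) (?r d) (nths xs (-S) ! ?r c) (nths xs (-S) ! ?r d)
         (nths (nths xs (-S)) (-{?r c, ?r d})))"
    by (subst sum.reindex_bij_betw[symmetric]) (auto simp: case_prod_unfold)
  also have "\<dots> = (\<Sum>(c,d)\<in>?P. F (?r c) (?r d) (xs ! c) (xs ! d) (nths xs (-insert c (insert d S))))"
    using nths_nths_rank_compl[of "{_,_}" S xs]
    by (intro sum.cong) (auto simp: nth_nths_rank_compl insert_commute)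
  finally show ?thesis .
qed

section \<open>Sums over pairs and triples of indices\<close>

abbreviation index_pairs :: "nat \<Rightarrow> (nat \<times> nat) set" where
  "index_pairs N \<equiv> {(a, b). a < b \<and> b < N}"

lemma finite_index_pairs [simp]:
  "finite (index_pairs N)" "finite {p. fst p < snd p \<and> snd p < N}"
  by (rule finite_subset[of _ "{..<N} \<times> {..<N}"], auto)+

lemma finite_index_pairs_restrict [simp]: "finite {p. fst p < snd p \<and> snd p < (N::nat) \<and> Q p}"
  by (rule finite_subset[of _ "{..<N} \<times> {..<N}"]) auto

lemma sum_index_pairs_Suc:
  "(\<Sum>(j,k)\<in>index_pairs (Suc M). h j k)
   = (\<Sum>k<M. h 0 (Suc k)) + (\<Sum>(j,k)\<in>index_pairs M. h (Suc j) (Suc k))"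
proof -
  have "index_pairs (Suc M)
    = (\<lambda>k. (0, Suc k)) ` {..<M} \<union> (\<lambda>(j,k). (Suc j, Suc k)) ` index_pairs M"
  proof (rule set_eqI, clarify)
    fix j k
    show "(j,k) \<in> index_pairs (Suc M)
      \<longleftrightarrow> (j,k) \<in> (\<lambda>k. (0, Suc k)) ` {..<M} \<union> (\<lambda>(j,k). (Suc j, Suc k)) ` index_pairs M"
      by (cases j; cases k) (auto simp: image_iff)
  qed
  then have "(\<Sum>(j,k)\<in>index_pairs (Suc M). h j k)
    = (\<Sum>(j,k)\<in>(\<lambda>k. (0, Suc k)) ` {..<M}. h j k)
      + (\<Sum>(j,k)\<in>(\<lambda>(j,k). (Suc j, Suc k)) ` index_pairs M. h j k)"
    by (simp only:) (rule sum.union_disjoint, auto)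
  also have "\<dots> = (\<Sum>k<M. h 0 (Suc k)) + (\<Sum>(j,k)\<in>index_pairs M. h (Suc j) (Suc k))"
    by (subst sum.reindex, force simp: inj_on_def)+ (simp add: case_prod_unfold)
  finally show ?thesis .
qed

lemma sum_off_diagonal:
  "(\<Sum>i<N. \<Sum>c | c < N \<and> c \<notin> {i}. F i c) = (\<Sum>(a,b)\<in>index_pairs N. F a b + F b a)"
proof -
  have "(\<Sum>i<N. \<Sum>c | c < N \<and> c \<notin> {i}. F i c)
    = (\<Sum>(i,c)\<in>Sigma {..<N} (\<lambda>i. {c. c < N \<and> c \<notin> {i}}). F i c)"
    by (rule sum.Sigma) auto
  also have "Sigma {..<N} (\<lambda>i. {c. c < N \<and> c \<notin> {i}}) = index_pairs N \<union> prod.swap ` index_pairs N"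
    by (auto simp: image_iff)
  also have "(\<Sum>(i,c)\<in>index_pairs N \<union> prod.swap ` index_pairs N. F i c)
    = (\<Sum>(i,c)\<in>index_pairs N. F i c) + (\<Sum>(i,c)\<in>prod.swap ` index_pairs N. F i c)"
    by (rule sum.union_disjoint) auto
  also have "(\<Sum>(i,c)\<in>prod.swap ` index_pairs N. F i c) = (\<Sum>(i,c)\<in>index_pairs N. F c i)"
    by (subst sum.reindex) (auto simp: inj_on_def case_prod_unfold)
  finally show ?thesis by (simp add: sum.distrib[symmetric] case_prod_unfold)
qed

lemma sum_index_pairs_exchange:
  "(\<Sum>i<N. \<Sum>(c,d) | c < d \<and> d < N \<and> c \<notin> {i} \<and> d \<notin> {i}. G i c d)
   = (\<Sum>(a,b)\<in>index_pairs N. \<Sum>e | e < N \<and> e \<notin> {a,b}. G e a b)"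
proof -
  have "(\<Sum>i<N. \<Sum>(c,d) | c < d \<and> d < N \<and> c \<notin> {i} \<and> d \<notin> {i}. G i c d)
     = (\<Sum>(i,p)\<in>Sigma {..<N} (\<lambda>i. {(c,d). c < d \<and> d < N \<and> c \<notin> {i} \<and> d \<notin> {i}}).
          G i (fst p) (snd p))"
    by (subst sum.Sigma[symmetric]) (auto simp: case_prod_unfold)
  also have "Sigma {..<N} (\<lambda>i. {(c,d). c < d \<and> d < N \<and> c \<notin> {i} \<and> d \<notin> {i}})
    = prod.swap ` Sigma (index_pairs N) (\<lambda>(a,b). {e. e < N \<and> e \<notin> {a,b}})"
    by (auto simp: image_iff)
  also have "(\<Sum>(i,p)\<in>prod.swap ` Sigma (index_pairs N) (\<lambda>(a,b). {e. e < N \<and> e \<notin> {a,b}}).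
      G i (fst p) (snd p))
    = (\<Sum>(p,i)\<in>Sigma (index_pairs N) (\<lambda>(a,b). {e. e < N \<and> e \<notin> {a,b}}). G i (fst p) (snd p))"
    by (subst sum.reindex) (auto simp: inj_on_def case_prod_unfold)
  also have "\<dots> = (\<Sum>(a,b)\<in>index_pairs N. \<Sum>e | e < N \<and> e \<notin> {a,b}. G e a b)"
    by (subst sum.Sigma[symmetric]) (auto simp: case_prod_unfold)
  finally show ?thesis .
qed

lemma sum_index_pairs_triples:
  "(\<Sum>(a,b)\<in>index_pairs N. \<Sum>e | e < N \<and> e \<notin> {a,b}. H a b e)
   = (\<Sum>(p,q,r) | p < q \<and> q < r \<and> r < N. H p q r + H p r q + H q r p)"
proof -
  let ?T = "{(p,q,r). p < q \<and> q < r \<and> r < (N::nat)}"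
  let ?i1 = "\<lambda>(p,q,r). ((p,q),r)" and ?i2 = "\<lambda>(p,q,r). ((p,r),q)" and ?i3 = "\<lambda>(p,q,r). ((q,r),p)"
  have finT: "finite ?T" by (rule finite_subset[of _ "{..<N} \<times> {..<N} \<times> {..<N}"]) auto
  have "(\<Sum>(a,b)\<in>index_pairs N. \<Sum>e | e < N \<and> e \<notin> {a,b}. H a b e)
    = (\<Sum>(p,e)\<in>Sigma (index_pairs N) (\<lambda>(a,b). {e. e < N \<and> e \<notin> {a,b}}). H (fst p) (snd p) e)"
    by (subst sum.Sigma[symmetric]) (auto simp: case_prod_unfold)
  also have "Sigma (index_pairs N) (\<lambda>(a,b). {e. e < N \<and> e \<notin> {a,b}}) = (?i1 ` ?T \<union> ?i2 ` ?T) \<union> ?i3 ` ?T"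
  proof (rule set_eqI)
    fix z :: "(nat \<times> nat) \<times> nat"
    obtain a b e where "z = ((a,b),e)" by (metis prod.exhaust)
    then show "z \<in> Sigma (index_pairs N) (\<lambda>(a,b). {e. e < N \<and> e \<notin> {a,b}})
        \<longleftrightarrow> z \<in> (?i1 ` ?T \<union> ?i2 ` ?T) \<union> ?i3 ` ?T"
      by (auto simp: image_iff)
  qed
  also have "(\<Sum>(p,e)\<in>(?i1 ` ?T \<union> ?i2 ` ?T) \<union> ?i3 ` ?T. H (fst p) (snd p) e)
     = (\<Sum>(p,e)\<in>?i1 ` ?T. H (fst p) (snd p) e) + (\<Sum>(p,e)\<in>?i2 ` ?T. H (fst p) (snd p) e)
       + (\<Sum>(p,e)\<in>?i3 ` ?T. H (fst p) (snd p) e)"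
    by (subst sum.union_disjoint, (force simp: finT)+)+
  also have "\<dots> = (\<Sum>(p,q,r)\<in>?T. H p q r) + (\<Sum>(p,q,r)\<in>?T. H p r q) + (\<Sum>(p,q,r)\<in>?T. H q r p)"
    by (subst sum.reindex, force simp: inj_on_def)+ (simp add: case_prod_unfold)
  finally show ?thesis by (simp add: sum.distrib[symmetric] case_prod_unfold)
qed

lemma sum_disjoint_index_pairs_eq_0:
  fixes H :: "nat \<Rightarrow> nat \<Rightarrow> nat \<Rightarrow> nat \<Rightarrow> 'b::ab_group_add"
  assumes "\<And>a b e h. a < b \<Longrightarrow> b < N \<Longrightarrow> e < h \<Longrightarrow> h < N \<Longrightarrow> e \<notin> {a,b} \<Longrightarrow> h \<notin> {a,b} \<Longrightarrow> a < e
      \<Longrightarrow> H a b e h + H e h a b = 0"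
  shows "(\<Sum>(a,b)\<in>index_pairs N. \<Sum>(e,h) | e < h \<and> h < N \<and> e \<notin> {a,b} \<and> h \<notin> {a,b}. H a b e h) = 0"
proof -
  let ?Q = "Sigma (index_pairs N) (\<lambda>(a,b). {(e,h). e < h \<and> h < N \<and> e \<notin> {a,b} \<and> h \<notin> {a,b}})"
  \<comment> \<open>no halving in an abelian group: split the swap orbits by which pair starts first\<close>
  let ?Q1 = "{z\<in>?Q. fst (fst z) < fst (snd z)}"
  let ?H = "\<lambda>z. H (fst (fst z)) (snd (fst z)) (fst (snd z)) (snd (snd z))"
  have finQ: "finite ?Q" by (rule finite_subset[of _ "({..<N} \<times> {..<N}) \<times> ({..<N} \<times> {..<N})"]) auto
  have "(\<Sum>(a,b)\<in>index_pairs N. \<Sum>(e,h) | e < h \<and> h < N \<and> e \<notin> {a,b} \<and> h \<notin> {a,b}. H a b e h)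
     = (\<Sum>(p,q)\<in>?Q. H (fst p) (snd p) (fst q) (snd q))"
    by (subst sum.Sigma[symmetric]) (auto simp: case_prod_unfold)
  also have "\<dots> = sum ?H ?Q"
    by (simp add: case_prod_unfold)
  also have "?Q = ?Q1 \<union> prod.swap ` ?Q1" by (auto simp: image_iff)
  also have "sum ?H (?Q1 \<union> prod.swap ` ?Q1) = sum ?H ?Q1 + sum ?H (prod.swap ` ?Q1)"
    by (rule sum.union_disjoint) (auto intro: finite_subset[OF _ finQ])
  also have "sum ?H (prod.swap ` ?Q1) = sum (?H \<circ> prod.swap) ?Q1"
    by (rule sum.reindex) (auto simp: inj_on_def)
  also have "sum ?H ?Q1 + sum (?H \<circ> prod.swap) ?Q1 = 0"
    by (subst sum.distrib[symmetric], rule sum.neutral) (auto intro!: assms)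
  finally show ?thesis .
qed

definition signed :: "nat \<Rightarrow> 'b::ab_group_add \<Rightarrow> 'b" where
  "signed k x = (if even k then x else - x)"

lemma signed_0 [simp]: "signed 0 x = x"
  by (simp add: signed_def)

lemma signed_zero [simp]: "signed k 0 = 0"
  by (simp add: signed_def)

lemma signed_add: "signed k (x + y) = signed k x + signed k y"
  by (simp add: signed_def)

lemma signed_minus: "signed k (- x) = - signed k x"
  by (simp add: signed_def)

lemma signed_diff: "signed k (x - y) = signed k x - signed k y"
  by (simp add: signed_def)

lemma signed_signed: "signed i (signed j x) = signed (i + j) x"
  by (simp add: signed_def)

lemma signed_sum: "signed k (sum g A) = (\<Sum>a\<in>A. signed k (g a))"
  by (simp add: signed_def sum_negf)

lemma signed_sum_list: "signed k (sum_list (map g xs)) = sum_list (map (\<lambda>t. signed k (g t)) xs)"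
  by (induction xs) (simp_all add: signed_add)

lemma signed_cong_parity: "even k \<longleftrightarrow> even k' \<Longrightarrow> signed k x = signed k' x"
  by (simp add: signed_def)

lemma signed_opposite_parity: "even k \<noteq> even k' \<Longrightarrow> signed k x = - signed k' x"
  by (auto simp add: signed_def)

lemma scale_minus_one_power:
  assumes "vector_space s"
  shows "s ((-1) ^ k) x = signed k x"
proof -
  interpret vector_space s by (rule assms)
  show ?thesis by (simp add: signed_def)
qed

section \<open>The Chevalley-Eilenberg differential squares to zero\<close>

definition ce_diff ::
  "('l \<Rightarrow> 'l \<Rightarrow> 'l) \<Rightarrow> ('l \<Rightarrow> 'b::ab_group_add \<Rightarrow> 'b) \<Rightarrow> nat \<Rightarrow> ('l list \<Rightarrow> 'b) \<Rightarrow> 'l list \<Rightarrow> 'b"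
  where "ce_diff phi psi n f xs =
     (\<Sum>i<n+1. signed i (psi (xs ! i) (f (nths xs (- {i})))))
   + (\<Sum>(j, k)\<in>index_pairs (n+1). signed (j + k) (f (phi (xs ! j) (xs ! k) # nths xs (- {j, k}))))"

lemma CE_d_eq_ce_diff: "vector_space sB \<Longrightarrow> CE_d sB phi psi n f = ce_diff phi psi n f"
  by (rule ext) (simp add: CE_d_def ce_diff_def scale_minus_one_power)

lemma nths_Cons_compl_0: "nths (u # ys) (- {0}) = ys"
  by (simp add: nths_Cons nths_all)

lemma nths_Cons_compl_Suc: "nths (u # ys) (- {Suc i}) = u # nths ys (- {i})"
  by (simp add: nths_Cons, rule arg_cong[where f="nths ys"]) auto

lemma nths_Cons_compl_0_Suc: "nths (u # ys) (- {0, Suc k}) = nths ys (- {k})"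
  by (simp add: nths_Cons, rule arg_cong[where f="nths ys"]) auto

lemma nths_Cons_compl_Suc_Suc: "nths (u # ys) (- {Suc j, Suc k}) = u # nths ys (- {j, k})"
  by (simp add: nths_Cons, rule arg_cong[where f="nths ys"]) auto

lemma ce_diff_nths_compl:
  assumes "length (nths xs (-S)) = m + 1"
  shows "ce_diff phi psi m f (nths xs (-S)) =
      (\<Sum>c | c < length xs \<and> c \<notin> S. signed (rank_compl S c) (psi (xs!c) (f (nths xs (-insert c S)))))
    + (\<Sum>(c,d) | c < d \<and> d < length xs \<and> c \<notin> S \<and> d \<notin> S.
        signed (rank_compl S c + rank_compl S d) (f (phi (xs!c) (xs!d) # nths xs (-insert c (insert d S)))))"
  unfolding ce_diff_def assms[symmetric]
  using sum_positions_nths_compl[of "\<lambda>i y r. signed i (psi y (f r))" xs S]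
    sum_pairs_nths_compl[of "\<lambda>j k y z r. signed (j+k) (f (phi y z # r))" xs S]
  by (simp only:)

lemma ce_diff_Cons_nths_compl:
  assumes len: "length (nths xs (-S)) = m"
  shows "ce_diff phi psi m f (w # nths xs (-S)) =
      psi w (f (nths xs (-S)))
    + (\<Sum>c | c < length xs \<and> c \<notin> S.
        signed (Suc (rank_compl S c)) (psi (xs!c) (f (w # nths xs (-insert c S)))))
    + ((\<Sum>c | c < length xs \<and> c \<notin> S.
        signed (Suc (rank_compl S c)) (f (phi w (xs!c) # nths xs (-insert c S))))
    + (\<Sum>(c,d) | c < d \<and> d < length xs \<and> c \<notin> S \<and> d \<notin> S.
        signed (Suc (rank_compl S c) + Suc (rank_compl S d))
          (f (phi (xs!c) (xs!d) # w # nths xs (-insert c (insert d S))))))"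
proof -
  let ?R = "nths xs (-S)"
  have "ce_diff phi psi m f (w # ?R) =
      psi w (f ?R)
    + (\<Sum>i<length ?R. signed (Suc i) (psi (?R ! i) (f (w # nths ?R (-{i})))))
    + ((\<Sum>k<length ?R. signed (Suc k) (f (phi w (?R ! k) # nths ?R (-{k}))))
    + (\<Sum>(j,k)\<in>index_pairs (length ?R).
        signed (Suc j + Suc k) (f (phi (?R ! j) (?R ! k) # w # nths ?R (-{j,k})))))"
    unfolding ce_diff_def Suc_eq_plus1[symmetric] sum.lessThan_Suc_shift sum_index_pairs_Suc len
    by (simp add: nths_Cons_compl_0 nths_Cons_compl_Suc nths_Cons_compl_0_Suc nths_Cons_compl_Suc_Suc
        add.assoc)
  then show ?thesis
    using sum_positions_nths_compl[of "\<lambda>i y r. signed (Suc i) (psi y (f (w # r)))" xs S]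
      sum_positions_nths_compl[of "\<lambda>i y r. signed (Suc i) (f (phi w y # r))" xs S]
      sum_pairs_nths_compl[of "\<lambda>j k y z r. signed (Suc j + Suc k) (f (phi y z # w # r))" xs S]
    by simp
qed

(* Exactly what d (d f) = 0 uses: no scalars, and of f only additivity and skew symmetry in the
   first two arguments. *)
locale lie_cochain =
  fixes phi :: "'l::ab_group_add \<Rightarrow> 'l \<Rightarrow> 'l" and psi :: "'l \<Rightarrow> 'b::ab_group_add \<Rightarrow> 'b"
    and f :: "'l list \<Rightarrow> 'b" and n :: nat
  assumes psi_add: "psi x (a + b) = psi x a + psi x b"
    and psi_bracket: "psi (phi x y) b = psi x (psi y b) - psi y (psi x b)"
    and phi_antisym: "phi y x = - phi x y"
    and jacobi: "phi (phi x y) z - phi (phi x z) y + phi (phi y z) x = 0"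
    and f_add: "length r + 1 = n \<Longrightarrow> f ((u + v) # r) = f (u # r) + f (v # r)"
    and f_swap: "length r + 2 = n \<Longrightarrow> f (v # u # r) = - f (u # v # r)"
begin

lemma psi_zero: "psi x 0 = 0"
  using psi_add[of x 0 0] by simp

lemma psi_minus: "psi x (- a) = - psi x a"
  using psi_add[of x a "- a"] psi_zero by (metis add.right_inverse minus_unique)

lemma psi_sum: "psi x (sum g A) = (\<Sum>a\<in>A. psi x (g a))"
  by (induction A rule: infinite_finite_induct) (auto simp: psi_zero psi_add)

lemma psi_signed: "psi x (signed k a) = signed k (psi x a)"
  by (simp add: signed_def psi_minus)

lemma f_zero: "length r + 1 = n \<Longrightarrow> f (0 # r) = 0"
  using f_add[of r 0 0] by simp

lemma f_minus: "length r + 1 = n \<Longrightarrow> f ((- u) # r) = - f (u # r)"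
  using f_add[of r u "- u"] f_zero by (metis add.right_inverse minus_unique)

lemma f_diff: "length r + 1 = n \<Longrightarrow> f ((u - v) # r) = f (u # r) - f (v # r)"
  using f_add[of r u "- v"] by (simp add: f_minus)

(* The six kinds of terms of d (d f) xs.  The first two come from the psi-part of the outer d
   (outer index i), the other four from its bracket part (outer indices a < b). *)
definition psi_psi_term :: "'l list \<Rightarrow> nat \<Rightarrow> nat \<Rightarrow> 'b" where
  "psi_psi_term xs i c =
     signed (i + rank_compl {i} c) (psi (xs!i) (psi (xs!c) (f (nths xs (-{c,i})))))"

definition psi_bracket_term :: "'l list \<Rightarrow> nat \<Rightarrow> nat \<Rightarrow> nat \<Rightarrow> 'b" where
  "psi_bracket_term xs i c d =
     signed (i + (rank_compl {i} c + rank_compl {i} d))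
       (psi (xs!i) (f (phi (xs!c) (xs!d) # nths xs (-{c,d,i}))))"

definition bracket_psi_term :: "'l list \<Rightarrow> nat \<Rightarrow> nat \<Rightarrow> 'b" where
  "bracket_psi_term xs a b = signed (a + b) (psi (phi (xs!a) (xs!b)) (f (nths xs (-{a,b}))))"

definition bracket_inner_psi_term :: "'l list \<Rightarrow> nat \<Rightarrow> nat \<Rightarrow> nat \<Rightarrow> 'b" where
  "bracket_inner_psi_term xs a b e =
     signed (a + b + Suc (rank_compl {a,b} e))
       (psi (xs!e) (f (phi (xs!a) (xs!b) # nths xs (-{e,a,b}))))"

definition nested_bracket_term :: "'l list \<Rightarrow> nat \<Rightarrow> nat \<Rightarrow> nat \<Rightarrow> 'b" where
  "nested_bracket_term xs a b e =
     signed (a + b + Suc (rank_compl {a,b} e))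
       (f (phi (phi (xs!a) (xs!b)) (xs!e) # nths xs (-{e,a,b})))"

definition two_brackets_term :: "'l list \<Rightarrow> nat \<Rightarrow> nat \<Rightarrow> nat \<Rightarrow> nat \<Rightarrow> 'b" where
  "two_brackets_term xs a b e h =
     signed (a + b + (Suc (rank_compl {a,b} e) + Suc (rank_compl {a,b} h)))
       (f (phi (xs!e) (xs!h) # phi (xs!a) (xs!b) # nths xs (-{e,h,a,b})))"

lemma psi_psi_terms_cancel:
  "(\<Sum>i<N. \<Sum>c | c < N \<and> c \<notin> {i}. psi_psi_term xs i c)
   + (\<Sum>(a,b)\<in>index_pairs N. bracket_psi_term xs a b) = 0"
proof -
  have "psi_psi_term xs a b + psi_psi_term xs b a + bracket_psi_term xs a b = 0" if "a < b" for a b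
  proof -
    have "rank_compl {a} b + 1 = b" "rank_compl {b} a = a"
      using rank_compl_singleton[of a b] rank_compl_singleton[of b a] that by auto
    then have "even (a + rank_compl {a} b) \<noteq> even (a + b)" "even (b + rank_compl {b} a) = even (a + b)"
      by presburger+
    then have "signed (a + rank_compl {a} b) x = - signed (a + b) x"
      and "signed (b + rank_compl {b} a) x = signed (a + b) x" for x :: 'b
      by (auto intro!: signed_opposite_parity signed_cong_parity)
    then show ?thesis
      by (simp add: psi_psi_term_def bracket_psi_term_def psi_bracket signed_diff insert_commute)
  qed
  then have "(\<Sum>(a,b)\<in>index_pairs N. psi_psi_term xs a b + psi_psi_term xs b a + bracket_psi_term xs a b) = 0"
    by (intro sum.neutral) auto
  then show ?thesis
    unfolding sum_off_diagonal by (simp add: sum.distrib[symmetric] case_prod_unfold)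
qed

lemma psi_bracket_terms_cancel:
  "(\<Sum>i<N. \<Sum>(c,d) | c < d \<and> d < N \<and> c \<notin> {i} \<and> d \<notin> {i}. psi_bracket_term xs i c d)
   + (\<Sum>(a,b)\<in>index_pairs N. \<Sum>e | e < N \<and> e \<notin> {a,b}. bracket_inner_psi_term xs a b e) = 0"
proof -
  have "psi_bracket_term xs e a b + bracket_inner_psi_term xs a b e = 0"
    if "a < b" "e \<noteq> a" "e \<noteq> b" for a b e
  proof -
    have "rank_compl {e} a + (if e < a then 1 else 0) = a"
      and "rank_compl {e} b + (if e < b then 1 else 0) = b"
      and "rank_compl {a,b} e + (if a < e then 1 else 0) + (if b < e then 1 else 0) = e"
      using rank_compl_singleton rank_compl_pair that by auto
    then have "rank_compl {e} a + rank_compl {e} b + rank_compl {a,b} e + 2 = a + b + e"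
      using that by (auto split: if_splits)
    then have "even (e + (rank_compl {e} a + rank_compl {e} b)) \<noteq> even (a + b + Suc (rank_compl {a,b} e))"
      by presburger
    then show ?thesis
      unfolding psi_bracket_term_def bracket_inner_psi_term_def
      by (simp add: signed_opposite_parity[where k' = "a + b + Suc (rank_compl {a,b} e)"] insert_commute)
  qed
  then have "(\<Sum>(a,b)\<in>index_pairs N. \<Sum>e | e < N \<and> e \<notin> {a,b}.
      psi_bracket_term xs e a b + bracket_inner_psi_term xs a b e) = 0"
    by (intro sum.neutral) auto
  then show ?thesis
    unfolding sum_index_pairs_exchange by (simp add: sum.distrib[symmetric] case_prod_unfold)
qed

lemma nested_bracket_terms_sum_eq_0:
  assumes len: "length xs = n + 2"
  shows "(\<Sum>(a,b)\<in>index_pairs (length xs). \<Sum>e | e < length xs \<and> e \<notin> {a,b}.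
      nested_bracket_term xs a b e) = 0"
proof -
  have "nested_bracket_term xs p q r + nested_bracket_term xs p r q + nested_bracket_term xs q r p = 0"
    if pqr: "p < q" "q < r" "r < length xs" for p q r
  proof -
    let ?R = "nths xs (-{p,q,r})"
    let ?A = "phi (phi (xs!p) (xs!q)) (xs!r)" and ?B = "phi (phi (xs!p) (xs!r)) (xs!q)"
      and ?C = "phi (phi (xs!q) (xs!r)) (xs!p)"
    have lR: "length ?R + 1 = n"
      using length_nths_compl_subset[of "{p,q,r}" xs] pqr len by (auto simp: card_insert_if)
    have "f (?A # ?R) - f (?B # ?R) + f (?C # ?R) = f ((?A - ?B + ?C) # ?R)"
      by (simp add: f_add[OF lR] f_diff[OF lR])
    also have "\<dots> = 0"
      by (simp add: jacobi f_zero[OF lR])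
    finally have jacobi_R: "f (?A # ?R) - f (?B # ?R) + f (?C # ?R) = 0" .
    have "rank_compl {p,q} r + 2 = r" "rank_compl {p,r} q + 1 = q" "rank_compl {q,r} p = p"
      using rank_compl_pair[of p q r] rank_compl_pair[of p r q] rank_compl_pair[of q r p] pqr by auto
    then have "signed (p + q + Suc (rank_compl {p,q} r)) x = signed (q + r + Suc (rank_compl {q,r} p)) x"
      and "signed (p + r + Suc (rank_compl {p,r} q)) x = - signed (q + r + Suc (rank_compl {q,r} p)) x"
      for x :: 'b
      by (intro signed_cong_parity signed_opposite_parity, presburger)+
    moreover have "{r,p,q} = {p,q,r}" "{q,p,r} = {p,q,r}" by auto
    ultimately show ?thesis
      using arg_cong[OF jacobi_R, of "signed (q + r + Suc (rank_compl {q,r} p))"]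
      unfolding nested_bracket_term_def by (simp add: signed_add signed_diff)
  qed
  then show ?thesis
    unfolding sum_index_pairs_triples by (intro sum.neutral) auto
qed

lemma two_brackets_terms_sum_eq_0:
  assumes len: "length xs = n + 2"
  shows "(\<Sum>(a,b)\<in>index_pairs (length xs). \<Sum>(e,h) | e < h \<and> h < length xs \<and> e \<notin> {a,b} \<and> h \<notin> {a,b}.
      two_brackets_term xs a b e h) = 0"
proof (rule sum_disjoint_index_pairs_eq_0)
  fix a b e h
  assume ab: "a < b" "b < length xs" and eh: "e < h" "h < length xs"
    and disj: "e \<notin> {a,b}" "h \<notin> {a,b}" "a < e"
  let ?R = "nths xs (-{a,b,e,h})"
  have "card {a,b,e,h} = 4" using ab eh disj by auto
  moreover have "card {a,b,e,h} \<le> length xs"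
    using card_mono[of "{..<length xs}" "{a,b,e,h}"] ab eh by auto
  ultimately have lR: "length ?R + 2 = n"
    using length_nths_compl_subset[of "{a,b,e,h}" xs] ab eh len by auto
  have "rank_compl {a,b} e + (if a < e then 1 else 0) + (if b < e then 1 else 0) = e"
    and "rank_compl {a,b} h + (if a < h then 1 else 0) + (if b < h then 1 else 0) = h"
    and "rank_compl {e,h} a + (if e < a then 1 else 0) + (if h < a then 1 else 0) = a"
    and "rank_compl {e,h} b + (if e < b then 1 else 0) + (if h < b then 1 else 0) = b"
    using rank_compl_pair ab eh by auto
  then have "rank_compl {a,b} e + rank_compl {a,b} h + rank_compl {e,h} a + rank_compl {e,h} b + 4
      = a + b + e + h"
    using ab eh disj by (auto split: if_splits)
  then have "signed (a + b + (Suc (rank_compl {a,b} e) + Suc (rank_compl {a,b} h))) x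
      = signed (e + h + (Suc (rank_compl {e,h} a) + Suc (rank_compl {e,h} b))) x" for x :: 'b
    by (intro signed_cong_parity) presburger
  moreover have "{e,h,a,b} = {a,b,e,h}" by auto
  ultimately show "two_brackets_term xs a b e h + two_brackets_term xs e h a b = 0"
    unfolding two_brackets_term_def by (simp add: f_swap[OF lR, of "phi (xs!a) (xs!b)"] signed_minus)
qed

lemma ce_diff_outer_psi_expand:
  assumes "i < length xs" "length xs = n + 2"
  shows "signed i (psi (xs!i) (ce_diff phi psi n f (nths xs (-{i}))))
    = (\<Sum>c | c < length xs \<and> c \<notin> {i}. psi_psi_term xs i c)
    + (\<Sum>(c,d) | c < d \<and> d < length xs \<and> c \<notin> {i} \<and> d \<notin> {i}. psi_bracket_term xs i c d)"
proof -
  have "length (nths xs (-{i})) = n + 1"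
    using assms length_nths_compl_subset[of "{i}" xs] by auto
  then show ?thesis
    by (simp add: ce_diff_nths_compl psi_add psi_sum psi_signed signed_add signed_sum signed_signed
        psi_psi_term_def psi_bracket_term_def case_prod_unfold)
qed

lemma ce_diff_outer_bracket_expand:
  assumes "a < b" "b < length xs" "length xs = n + 2"
  shows "signed (a + b) (ce_diff phi psi n f (phi (xs!a) (xs!b) # nths xs (-{a,b})))
    = bracket_psi_term xs a b
    + (\<Sum>e | e < length xs \<and> e \<notin> {a,b}. bracket_inner_psi_term xs a b e)
    + (\<Sum>e | e < length xs \<and> e \<notin> {a,b}. nested_bracket_term xs a b e)
    + (\<Sum>(e,h) | e < h \<and> h < length xs \<and> e \<notin> {a,b} \<and> h \<notin> {a,b}. two_brackets_term xs a b e h)"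
proof -
  have "length (nths xs (-{a,b})) = n"
    using assms length_nths_compl_subset[of "{a,b}" xs] by auto
  then show ?thesis
    by (simp add: ce_diff_Cons_nths_compl signed_add signed_sum signed_signed add.assoc
        bracket_psi_term_def bracket_inner_psi_term_def nested_bracket_term_def two_brackets_term_def
        case_prod_unfold)
qed

theorem ce_diff_ce_diff:
  assumes len: "length xs = n + 2"
  shows "ce_diff phi psi (n + 1) (ce_diff phi psi n f) xs = 0"
proof -
  let ?N = "length xs"
  let ?psi_psi = "\<Sum>i<?N. \<Sum>c | c < ?N \<and> c \<notin> {i}. psi_psi_term xs i c"
  let ?psi_bracket = "\<Sum>i<?N. \<Sum>(c,d) | c < d \<and> d < ?N \<and> c \<notin> {i} \<and> d \<notin> {i}. psi_bracket_term xs i c d"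
  let ?bracket_psi = "\<Sum>(a,b)\<in>index_pairs ?N. bracket_psi_term xs a b"
  let ?bracket_inner_psi = "\<Sum>(a,b)\<in>index_pairs ?N. \<Sum>e | e < ?N \<and> e \<notin> {a,b}. bracket_inner_psi_term xs a b e"
  let ?nested = "\<Sum>(a,b)\<in>index_pairs ?N. \<Sum>e | e < ?N \<and> e \<notin> {a,b}. nested_bracket_term xs a b e"
  let ?two = "\<Sum>(a,b)\<in>index_pairs ?N. \<Sum>(e,h) | e < h \<and> h < ?N \<and> e \<notin> {a,b} \<and> h \<notin> {a,b}.
      two_brackets_term xs a b e h"
  have "(\<Sum>i<?N. signed i (psi (xs!i) (ce_diff phi psi n f (nths xs (-{i}))))) = ?psi_psi + ?psi_bracket"
    unfolding sum.distrib[symmetric] by (rule sum.cong) (simp_all add: ce_diff_outer_psi_expand len)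
  moreover have "(\<Sum>(a,b)\<in>index_pairs ?N.
        signed (a + b) (ce_diff phi psi n f (phi (xs!a) (xs!b) # nths xs (-{a,b}))))
      = ?bracket_psi + ?bracket_inner_psi + ?nested + ?two"
    unfolding sum.distrib[symmetric] by (rule sum.cong) (auto simp: ce_diff_outer_bracket_expand len)
  ultimately have "ce_diff phi psi (n + 1) (ce_diff phi psi n f) xs
      = (?psi_psi + ?bracket_psi) + (?psi_bracket + ?bracket_inner_psi) + ?nested + ?two"
    by (simp add: ce_diff_def len algebra_simps)
  then show ?thesis
    by (simp only: psi_psi_terms_cancel psi_bracket_terms_cancel nested_bracket_terms_sum_eq_0[OF len]
        two_brackets_terms_sum_eq_0[OF len] add_0)
qed

end

lemma linear_additive: "Vector_Spaces.linear s1 s2 h \<Longrightarrow> h (x + y) = h x + h y"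
  by (simp add: linear_iff)

lemma linear_minus: "Vector_Spaces.linear s1 s2 h \<Longrightarrow> h (- x) = - h x"
  using linear_additive[of s1 s2 h 0 0] linear_additive[of s1 s2 h x "- x"]
  by (simp add: eq_neg_iff_add_eq_0 add.commute)

lemma permute_list_transpose_0_1: "permute_list (transpose 0 1) (u # v # r) = v # u # r"
proof (rule nth_equalityI)
  fix i assume "i < length (permute_list (transpose 0 1) (u # v # r))"
  moreover have "transpose 0 1 permutes {..<length (u # v # r)}" by (rule permutes_swap_id) auto
  ultimately show "permute_list (transpose 0 1) (u # v # r) ! i = (v # u # r) ! i"
    by (cases i; cases "i - 1") (auto simp: permute_list_nth transpose_def)
qed simp

lemma lie_algebra_antisym:
  assumes "lie_algebra sL phi"
  shows "phi y x = - phi x y"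
proof -
  have "Vector_Spaces.linear sL sL (\<lambda>a. phi a y)" "Vector_Spaces.linear sL sL (phi x)" for x y
    using assms by (auto simp: lie_algebra_def bilinear_map_def)
  then have add1: "phi (a + b) y = phi a y + phi b y" and add2: "phi x (a + b) = phi x a + phi x b"
    for x y a b
    by (auto dest: linear_additive)
  have "phi (x + y) (x + y) = phi x x + phi x y + (phi y x + phi y y)"
    by (simp add: add1 add2)
  moreover have "phi z z = 0" for z
    using assms by (simp add: lie_algebra_def)
  ultimately have "phi x y + phi y x = 0" by simp
  then show ?thesis by (simp add: eq_neg_iff_add_eq_0 add.commute)
qed

lemma lie_algebra_jacobi_left:
  assumes "lie_algebra sL phi"
  shows "phi (phi x y) z - phi (phi x z) y + phi (phi y z) x = 0"
proof -
  have "Vector_Spaces.linear sL sL (phi y)"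
    using assms by (simp add: lie_algebra_def bilinear_map_def)
  then have "phi (phi x y) z - phi (phi x z) y + phi (phi y z) x
      = - (phi x (phi y z) + phi y (phi z x) + phi z (phi x y))"
    using lie_algebra_antisym[OF assms, of "phi x y" z] lie_algebra_antisym[OF assms, of "phi x z" y]
      lie_algebra_antisym[OF assms, of "phi y z" x] lie_algebra_antisym[OF assms, of z x]
    by (simp add: linear_minus algebra_simps)
  also have "\<dots> = 0" using assms by (simp add: lie_algebra_def)
  finally show ?thesis .
qed

lemma lie_cochain_of_Alt:
  assumes L: "lie_algebra sL phi" and M: "lie_module sL phi sB psi" and f: "f \<in> Alt sL sB n"
  shows "lie_cochain phi psi f n"
proof
  show "psi x (a + b) = psi x a + psi x b" for x a b
    using M by (intro linear_additive[of sB sB]) (simp add: lie_module_def bilinear_map_def)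
  show "psi (phi x y) b = psi x (psi y b) - psi y (psi x b)" for x y b
    using M by (simp add: lie_module_def)
  show "phi y x = - phi x y" for x y
    using L by (rule lie_algebra_antisym)
  show "phi (phi x y) z - phi (phi x z) y + phi (phi y z) x = 0" for x y z
    using L by (rule lie_algebra_jacobi_left)
  show "f ((u + v) # r) = f (u # r) + f (v # r)" if "length r + 1 = n" for r u v
  proof -
    have "multilinear_on sL sB n f" using f by (simp add: Alt_def)
    then have "Vector_Spaces.linear sL sB (\<lambda>w. f ((u # r)[0 := w]))"
      using that unfolding multilinear_on_def
      by (metis length_Cons add.commute plus_1_eq_Suc zero_less_Suc)
    from linear_additive[OF this, of u v] show ?thesis by simp
  qed
  show "f (v # u # r) = - f (u # v # r)" if "length r + 2 = n" for r u v
  proof -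
    have "transpose 0 1 permutes {..<n}" by (rule permutes_swap_id) (use that in auto)
    then have "f (permute_list (transpose 0 1) (u # v # r))
        = sB (of_int (sign (transpose (0::nat) 1))) (f (u # v # r))"
      using f that by (auto simp: Alt_def)
    then have "f (v # u # r) = sB (-1) (f (u # v # r))"
      unfolding permute_list_transpose_0_1 by (simp add: sign_swap_id)
    moreover have "vector_space sB" using M by (simp add: lie_module_def)
    ultimately show ?thesis
      using scale_minus_one_power[of sB 1] by (simp add: signed_def)
  qed
qed

section \<open>Unshuffles\<close>

definition cycle_perm :: "nat \<Rightarrow> nat \<Rightarrow> nat \<Rightarrow> nat" where
  "cycle_perm a i l = (if l = a then i else if a < l \<and> l \<le> i then l - 1 else l)"

lemma cycle_perm_Suc: "a \<le> i \<Longrightarrow> cycle_perm a (Suc i) = transpose i (Suc i) \<circ> cycle_perm a i"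
  by (rule ext) (auto simp: cycle_perm_def transpose_def)

lemma cycle_perm_permutes_sign:
  "a + d < m \<Longrightarrow> cycle_perm a (a + d) permutes {..<m} \<and> sign (cycle_perm a (a + d)) = (-1) ^ d"
proof (induction d)
  case 0
  have "cycle_perm a a = id" by (rule ext) (simp add: cycle_perm_def)
  then show ?case using permutes_id[of "{..<m}"] by (simp add: sign_id id_def)
next
  case (Suc d)
  let ?t = "transpose (a + d) (Suc (a + d))"
  have IH: "cycle_perm a (a + d) permutes {..<m}" "sign (cycle_perm a (a + d)) = (-1) ^ d"
    using Suc by auto
  have "?t permutes {..<m}" by (rule permutes_swap_id) (use Suc.prems in auto)
  then have "?t \<circ> cycle_perm a (a + d) permutes {..<m}" by (rule permutes_compose[OF IH(1)])
  moreover have "sign (?t \<circ> cycle_perm a (a + d)) = (-1) ^ Suc d"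
    using sign_compose[OF permutation_swap_id permutes_imp_permutation[OF _ IH(1)]] IH(2)
    by (simp add: sign_swap_id)
  ultimately show ?case using cycle_perm_Suc[of a "a + d"] by (simp del: o_apply)
qed

lemma sorted_wrt_map_strict_mono_on:
  "strict_mono_on {p..<m} \<sigma> \<Longrightarrow> sorted_wrt (<) (map \<sigma> [p..<m])"
  unfolding sorted_wrt_map sorted_wrt_iff_nth_less by (auto simp: strict_mono_onD)

lemma unshuffles_eqI:
  fixes \<sigma> \<tau> :: "nat \<Rightarrow> nat"
  assumes s: "\<sigma> permutes {..<m}" and t: "\<tau> permutes {..<m}"
    and ms: "strict_mono_on {p..<m} \<sigma>" and mt: "strict_mono_on {p..<m} \<tau>"
    and eq: "\<And>l. l < p \<Longrightarrow> \<sigma> l = \<tau> l" and pm: "p \<le> m"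
  shows "\<sigma> = \<tau>"
proof -
  have ee: "{p..<m} = {..<m} - {..<p}" by auto
  have "\<sigma> ` {p..<m} = \<tau> ` {p..<m}"
    unfolding ee image_set_diff[OF permutes_inj[OF s]] image_set_diff[OF permutes_inj[OF t]]
    using eq permutes_image[OF s] permutes_image[OF t] by auto
  then have "map \<sigma> [p..<m] = map \<tau> [p..<m]"
    using sorted_wrt_map_strict_mono_on[OF ms] sorted_wrt_map_strict_mono_on[OF mt]
    by (intro sorted_distinct_set_unique) (auto simp: strict_sorted_iff)
  then have "\<sigma> l = \<tau> l" if "p \<le> l" "l < m" for l
    using that by (metis atLeastLessThan_iff map_eq_conv set_upt)
  then show ?thesis
    using eq permutes_not_in[OF s] permutes_not_in[OF t] by (metis ext lessThan_iff not_le)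
qed

lemma cycle_perm_0_unshuffles: "i < n + 1 \<Longrightarrow> cycle_perm 0 i \<in> unshuffles 1 n"
  using cycle_perm_permutes_sign[of 0 i "n + 1"]
  by (auto simp: unshuffles_def strict_mono_on_def cycle_perm_def)

lemma bij_betw_cycle_perm_0_unshuffles: "bij_betw (cycle_perm 0) {..<n + 1} (unshuffles 1 n)"
proof (rule bij_betw_imageI)
  show "inj_on (cycle_perm 0) {..<n + 1}"
    by (rule inj_onI) (metis cycle_perm_def)
  show "cycle_perm 0 ` {..<n + 1} = unshuffles 1 n"
  proof
    show "cycle_perm 0 ` {..<n + 1} \<subseteq> unshuffles 1 n" using cycle_perm_0_unshuffles by auto
    show "unshuffles 1 n \<subseteq> cycle_perm 0 ` {..<n + 1}"
    proof
      fix \<sigma> assume "\<sigma> \<in> unshuffles 1 n"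
      then have s: "\<sigma> permutes {..<n + 1}" and ms: "strict_mono_on {1..<n + 1} \<sigma>"
        by (auto simp: unshuffles_def)
      have s0: "\<sigma> 0 < n + 1" using permutes_in_image[OF s, of 0] by simp
      have "\<sigma> = cycle_perm 0 (\<sigma> 0)"
        using cycle_perm_permutes_sign[of 0 "\<sigma> 0" "n + 1"] cycle_perm_0_unshuffles[OF s0] s0
        by (intro unshuffles_eqI[OF s _ ms]) (auto simp: unshuffles_def cycle_perm_def)
      then show "\<sigma> \<in> cycle_perm 0 ` {..<n + 1}" using s0 by auto
    qed
  qed
qed

definition unshuffle_pair :: "nat \<Rightarrow> nat \<Rightarrow> nat \<Rightarrow> nat" where
  "unshuffle_pair j k = cycle_perm 0 j \<circ> cycle_perm 1 k"

lemma unshuffle_pair_0_1: "j < k \<Longrightarrow> unshuffle_pair j k 0 = j \<and> unshuffle_pair j k 1 = k"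
  by (simp add: unshuffle_pair_def cycle_perm_def)

lemma unshuffle_pair_permutes_sign:
  assumes "j < k" "k < m"
  shows "unshuffle_pair j k permutes {..<m} \<and> sign (unshuffle_pair j k) = (-1) ^ j * (-1) ^ (k - 1)"
proof -
  have a: "cycle_perm 0 j permutes {..<m}" "sign (cycle_perm 0 j) = (-1) ^ j"
    using cycle_perm_permutes_sign[of 0 j m] assms by auto
  have b: "cycle_perm 1 k permutes {..<m}" "sign (cycle_perm 1 k) = (-1) ^ (k - 1)"
    using cycle_perm_permutes_sign[of 1 "k - 1" m] assms by auto
  show ?thesis unfolding unshuffle_pair_def
    using permutes_compose[OF b(1) a(1)] a b
    by (simp add: sign_compose permutes_imp_permutation[of "{..<m}"])
qed

lemma unshuffle_pair_unshuffles: "j < k \<Longrightarrow> k < n + 2 \<Longrightarrow> unshuffle_pair j k \<in> unshuffles 2 n"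
  using unshuffle_pair_permutes_sign[of j k "n + 2"]
  by (auto simp: unshuffles_def strict_mono_on_def cycle_perm_def unshuffle_pair_def add.commute)

lemma bij_betw_unshuffle_pair_unshuffles:
  "bij_betw (\<lambda>(j,k). unshuffle_pair j k) (index_pairs (n + 2)) (unshuffles 2 n)"
proof (rule bij_betw_imageI)
  show "inj_on (\<lambda>(j,k). unshuffle_pair j k) (index_pairs (n + 2))"
    by (rule inj_onI) (clarsimp, metis unshuffle_pair_0_1)
  show "(\<lambda>(j,k). unshuffle_pair j k) ` index_pairs (n + 2) = unshuffles 2 n"
  proof
    show "(\<lambda>(j,k). unshuffle_pair j k) ` index_pairs (n + 2) \<subseteq> unshuffles 2 n"
      using unshuffle_pair_unshuffles by auto
    show "unshuffles 2 n \<subseteq> (\<lambda>(j,k). unshuffle_pair j k) ` index_pairs (n + 2)"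
    proof
      fix \<sigma> assume "\<sigma> \<in> unshuffles 2 n"
      then have s: "\<sigma> permutes {..<n + 2}" and ms0: "strict_mono_on {..<2} \<sigma>"
        and ms: "strict_mono_on {2..<n + 2} \<sigma>"
        by (auto simp: unshuffles_def add.commute)
      have lt: "\<sigma> 0 < \<sigma> 1" using ms0 by (auto simp: strict_mono_on_def)
      have b1: "\<sigma> 1 < n + 2" using permutes_in_image[OF s, of 1] by simp
      have "\<sigma> = unshuffle_pair (\<sigma> 0) (\<sigma> 1)"
      proof (rule unshuffles_eqI[OF s _ ms])
        show "unshuffle_pair (\<sigma> 0) (\<sigma> 1) permutes {..<n + 2}"
          using unshuffle_pair_permutes_sign[OF lt b1] by simp
        show "strict_mono_on {2..<n + 2} (unshuffle_pair (\<sigma> 0) (\<sigma> 1))"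
          using unshuffle_pair_unshuffles[OF lt b1] by (simp add: unshuffles_def add.commute)
        show "\<sigma> l = unshuffle_pair (\<sigma> 0) (\<sigma> 1) l" if "l < 2" for l
          using that unshuffle_pair_0_1[OF lt] by (cases l) (auto simp: less_2_cases_iff)
      qed simp
      then show "\<sigma> \<in> (\<lambda>(j,k). unshuffle_pair j k) ` index_pairs (n + 2)"
        using lt b1 by (auto simp: image_iff)
    qed
  qed
qed

lemma map_cycle_perm_0:
  assumes "length y = m" "i < m"
  shows "map (\<lambda>l. y ! cycle_perm 0 i l) [1..<m] = nths y (-{i})"
proof (rule nth_equalityI)
  show "length (map (\<lambda>l. y ! cycle_perm 0 i l) [1..<m]) = length (nths y (-{i}))"
    using length_nths_compl_subset[of "{i}" y] assms by simp
  fix l assume "l < length (map (\<lambda>l. y ! cycle_perm 0 i l) [1..<m])"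
  then have l: "l < m - 1" by simp
  let ?c = "cycle_perm 0 i (Suc l)"
  have c: "?c = (if Suc l \<le> i then l else Suc l)" by (simp add: cycle_perm_def)
  then have "rank_compl {i} ?c = l" using rank_compl_singleton[of i ?c] by (auto split: if_splits)
  then show "map (\<lambda>l. y ! cycle_perm 0 i l) [1..<m] ! l = nths y (-{i}) ! l"
    using nth_nths_rank_compl[of ?c y "{i}"] c l assms by auto
qed

lemma map_unshuffle_pair:
  assumes "length y = m" "j < k" "k < m"
  shows "map (\<lambda>l. y ! unshuffle_pair j k l) [2..<m] = nths y (-{j,k})"
proof (rule nth_equalityI)
  show "length (map (\<lambda>l. y ! unshuffle_pair j k l) [2..<m]) = length (nths y (-{j,k}))"
    using length_nths_compl_subset[of "{j,k}" y] assms by simp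
  fix l assume "l < length (map (\<lambda>l. y ! unshuffle_pair j k l) [2..<m])"
  then have l: "l < m - 2" by simp
  let ?c = "unshuffle_pair j k (2 + l)"
  have c: "?c = (if 2 + l \<le> k then (if 1 + l \<le> j then l else 1 + l) else 2 + l)"
    using assms by (simp add: unshuffle_pair_def cycle_perm_def)
  then have "rank_compl {j,k} ?c = l"
    using rank_compl_pair[of j k ?c] assms by (auto split: if_splits)
  then show "map (\<lambda>l. y ! unshuffle_pair j k l) [2..<m] ! l = nths y (-{j,k}) ! l"
    using nth_nths_rank_compl[of ?c y "{j,k}"] c l assms by auto
qed

section \<open>The differential on tensor-product-valued maps\<close>

definition eval_tensor :: "('c \<Rightarrow> 'l) list \<Rightarrow> 'c list \<Rightarrow> 'l list" where
  "eval_tensor gs t = map (\<lambda>i. (gs ! i) (t ! i)) [0..<length gs]"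

lemma length_eval_tensor [simp]: "length (eval_tensor gs t) = length gs"
  by (simp add: eval_tensor_def)

lemma nth_permute_list_apply:
  assumes "\<sigma> permutes {..<length gs}" "l < length gs"
  shows "(permute_list \<sigma> gs ! l) (t ! \<sigma> l) = eval_tensor gs t ! \<sigma> l"
  using assms permutes_in_image[OF assms(1), of l]
  by (simp add: permute_list_nth eval_tensor_def del: upt_Suc)

lemma sum_sum_list_swap:
  "(\<Sum>p\<in>A. sum_list (map (h p) xs)) = sum_list (map (\<lambda>t. \<Sum>p\<in>A. h p t) xs)"
  by (induction xs) (simp_all add: sum.distrib)

lemma PsiF_sup_act:
  assumes "\<sigma> permutes {..<length gs}" "length gs = Suc m"
  shows "PsiF_sup Delta psi G (Suc m) \<sigma> (act \<sigma> gs) c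
    = sum_list (map (\<lambda>t. psi (eval_tensor gs t ! \<sigma> 0) (G (map (\<lambda>l. eval_tensor gs t ! \<sigma> l) [1..<Suc m])))
        (iter_cop Delta m c))"
proof -
  have tail: "map (\<lambda>i. (permute_list \<sigma> gs ! i) (t ! \<sigma> i)) [1..<Suc m]
      = map (\<lambda>l. eval_tensor gs t ! \<sigma> l) [1..<Suc m]"
    and head0: "(permute_list \<sigma> gs ! 0) (t ! \<sigma> 0) = eval_tensor gs t ! \<sigma> 0" for t
    using assms by (auto simp: nth_permute_list_apply)
  show ?thesis unfolding PsiF_sup_def act_def tail head0 by simp
qed

lemma FPhi_sup_act:
  assumes "\<sigma> permutes {..<length gs}" "length gs = Suc (Suc m)"
  shows "FPhi_sup Delta phi G (Suc (Suc m)) \<sigma> (act \<sigma> gs) c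
    = sum_list (map (\<lambda>t. G (phi (eval_tensor gs t ! \<sigma> 0) (eval_tensor gs t ! \<sigma> 1)
                          # map (\<lambda>l. eval_tensor gs t ! \<sigma> l) [2..<Suc (Suc m)]))
        (iter_cop Delta (Suc m) c))"
proof -
  have tail: "map (\<lambda>i. (permute_list \<sigma> gs ! i) (t ! \<sigma> i)) [2..<Suc (Suc m)]
      = map (\<lambda>l. eval_tensor gs t ! \<sigma> l) [2..<Suc (Suc m)]"
    and head0: "(permute_list \<sigma> gs ! 0) (t ! \<sigma> 0) = eval_tensor gs t ! \<sigma> 0"
    and head1: "(permute_list \<sigma> gs ! 1) (t ! \<sigma> 1) = eval_tensor gs t ! \<sigma> 1" for t
    using assms by (auto simp: nth_permute_list_apply)
  show ?thesis unfolding FPhi_sup_def act_def tail head0 head1 by simp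
qed

lemma sum_unshuffles_1_PsiF_sup:
  assumes "vector_space sB" "length gs = n + 1"
  shows "(\<Sum>\<sigma>\<in>unshuffles 1 n. sB (of_int (sign \<sigma>)) (PsiF_sup Delta psi G (n + 1) \<sigma> (act \<sigma> gs) c))
    = sum_list (map (\<lambda>t. \<Sum>i<n + 1. signed i (psi (eval_tensor gs t ! i) (G (nths (eval_tensor gs t) (-{i})))))
        (iter_cop Delta n c))"
proof -
  have summand: "sB (of_int (sign (cycle_perm 0 i)))
      (PsiF_sup Delta psi G (n + 1) (cycle_perm 0 i) (act (cycle_perm 0 i) gs) c)
    = signed i (sum_list (map (\<lambda>t. psi (eval_tensor gs t ! i) (G (nths (eval_tensor gs t) (-{i}))))
        (iter_cop Delta n c)))" if "i < n + 1" for i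
  proof -
    have "cycle_perm 0 i permutes {..<n + 1}" "sign (cycle_perm 0 i) = (-1) ^ i"
      using cycle_perm_permutes_sign[of 0 i "n + 1"] that by auto
    moreover have "map (\<lambda>l. eval_tensor gs t ! cycle_perm 0 i l) [1..<n + 1] = nths (eval_tensor gs t) (-{i})" for t
      using map_cycle_perm_0[of "eval_tensor gs t" "n + 1" i] that assms(2) by simp
    ultimately show ?thesis
      using PsiF_sup_act[of "cycle_perm 0 i" gs n Delta psi G c] assms
      by (simp add: scale_minus_one_power cycle_perm_def)
  qed
  have "(\<Sum>\<sigma>\<in>unshuffles 1 n. sB (of_int (sign \<sigma>)) (PsiF_sup Delta psi G (n + 1) \<sigma> (act \<sigma> gs) c))
    = (\<Sum>i<n + 1. sB (of_int (sign (cycle_perm 0 i)))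
        (PsiF_sup Delta psi G (n + 1) (cycle_perm 0 i) (act (cycle_perm 0 i) gs) c))"
    by (rule sum.reindex_bij_betw[symmetric, OF bij_betw_cycle_perm_0_unshuffles])
  also have "\<dots> = (\<Sum>i<n + 1. signed i (sum_list (map (\<lambda>t. psi (eval_tensor gs t ! i)
      (G (nths (eval_tensor gs t) (-{i})))) (iter_cop Delta n c))))"
    by (rule sum.cong[OF refl], rule summand) simp
  finally show ?thesis
    by (simp add: signed_sum_list sum_sum_list_swap)
qed

lemma sum_unshuffles_2_FPhi_sup:
  assumes "vector_space sB" "length gs = n + 2"
  shows "(\<Sum>\<sigma>\<in>unshuffles 2 n. sB (of_int (sign \<sigma>)) (FPhi_sup Delta phi G (n + 2) \<sigma> (act \<sigma> gs) c))
    = - sum_list (map (\<lambda>t. \<Sum>(j,k)\<in>index_pairs (n + 2). signed (j + k)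
          (G (phi (eval_tensor gs t ! j) (eval_tensor gs t ! k) # nths (eval_tensor gs t) (-{j,k}))))
        (iter_cop Delta (n + 1) c))"
proof -
  have summand: "sB (of_int (sign (unshuffle_pair j k)))
      (FPhi_sup Delta phi G (n + 2) (unshuffle_pair j k) (act (unshuffle_pair j k) gs) c)
    = - signed (j + k) (sum_list (map (\<lambda>t.
        G (phi (eval_tensor gs t ! j) (eval_tensor gs t ! k) # nths (eval_tensor gs t) (-{j,k})))
        (iter_cop Delta (n + 1) c)))" if jk: "j < k" "k < n + 2" for j k
  proof -
    have "unshuffle_pair j k permutes {..<n + 2}"
      and "sign (unshuffle_pair j k) = (-1) ^ (j + (k - 1))"
      using unshuffle_pair_permutes_sign[OF jk] by (auto simp: power_add)
    moreover have "signed (j + (k - 1)) x = - signed (j + k) x" for x :: 'b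
      using jk by (intro signed_opposite_parity) presburger
    moreover have "map (\<lambda>l. eval_tensor gs t ! unshuffle_pair j k l) [2..<n + 2]
        = nths (eval_tensor gs t) (-{j,k})" for t
      using map_unshuffle_pair[of "eval_tensor gs t" "n + 2" j k] jk assms(2) by simp
    ultimately show ?thesis
      using FPhi_sup_act[of "unshuffle_pair j k" gs n Delta phi G c] unshuffle_pair_0_1[OF jk(1)] assms
      by (simp add: scale_minus_one_power signed_minus)
  qed
  have "(\<Sum>\<sigma>\<in>unshuffles 2 n. sB (of_int (sign \<sigma>)) (FPhi_sup Delta phi G (n + 2) \<sigma> (act \<sigma> gs) c))
    = (\<Sum>(j,k)\<in>index_pairs (n + 2). sB (of_int (sign (unshuffle_pair j k)))
        (FPhi_sup Delta phi G (n + 2) (unshuffle_pair j k) (act (unshuffle_pair j k) gs) c))"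
    by (subst sum.reindex_bij_betw[symmetric, OF bij_betw_unshuffle_pair_unshuffles])
      (simp add: case_prod_unfold)
  also have "\<dots> = (\<Sum>(j,k)\<in>index_pairs (n + 2). - signed (j + k) (sum_list (map (\<lambda>t.
        G (phi (eval_tensor gs t ! j) (eval_tensor gs t ! k) # nths (eval_tensor gs t) (-{j,k})))
        (iter_cop Delta (n + 1) c))))"
    by (rule sum.cong[OF refl], clarify, rule summand) simp_all
  finally show ?thesis
    by (simp add: signed_sum_list sum_sum_list_swap sum_negf uminus_sum_list_map case_prod_unfold o_def)
qed

theorem TD_delta_eq_sum_ce_diff:
  assumes "vector_space sB" "length gs = n + 2"
  shows "TD_delta sB Delta phi psi (n + 1) G gs c
    = sum_list (map (\<lambda>t. ce_diff phi psi (n + 1) G (eval_tensor gs t)) (iter_cop Delta (n + 1) c))"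
  using sum_unshuffles_1_PsiF_sup[of sB gs "n + 1" Delta psi G c]
    sum_unshuffles_2_FPhi_sup[of sB gs n Delta phi G c] assms
  by (simp add: TD_delta_def ce_diff_def sum_list_addf)

theorem corollary3:
  fixes sC :: "'k::field \<Rightarrow> 'c::ab_group_add \<Rightarrow> 'c"
    and sL :: "'k \<Rightarrow> 'l::ab_group_add \<Rightarrow> 'l"
    and sB :: "'k \<Rightarrow> 'b::ab_group_add \<Rightarrow> 'b"
    and Delta :: "'c \<Rightarrow> ('c \<times> 'c) list"
    and phi :: "'l \<Rightarrow> 'l \<Rightarrow> 'l"
    and psi :: "'l \<Rightarrow> 'b \<Rightarrow> 'b"
    and n :: nat
    and f :: "'l list \<Rightarrow> 'b"
  assumes "coassoc_coalgebra sC Delta"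
    and "lie_algebra sL phi"
    and "lie_module sL phi sB psi"
    and "f \<in> Alt sL sB n"
  shows "\<forall>gs c. length gs = n + 2 \<longrightarrow> (\<forall>g\<in>set gs. Vector_Spaces.linear sC sL g) \<longrightarrow>
           TD_delta sB Delta phi psi (n + 1) (CE_d sB phi psi n f) gs c = 0"
proof (intro allI impI)
  fix gs :: "('c \<Rightarrow> 'l) list" and c :: 'c
  assume len: "length gs = n + 2"
  have vB: "vector_space sB" using assms(3) by (simp add: lie_module_def)
  interpret lie_cochain phi psi f n
    using assms(2-4) by (rule lie_cochain_of_Alt)
  have "TD_delta sB Delta phi psi (n + 1) (CE_d sB phi psi n f) gs c
     = sum_list (map (\<lambda>t. ce_diff phi psi (n + 1) (ce_diff phi psi n f) (eval_tensor gs t))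
         (iter_cop Delta (n + 1) c))"
    unfolding CE_d_eq_ce_diff[OF vB] by (rule TD_delta_eq_sum_ce_diff[OF vB len])
  also have "\<dots> = 0"
  proof -
    have "ce_diff phi psi (n + 1) (ce_diff phi psi n f) (eval_tensor gs t) = 0" for t
      using len by (intro ce_diff_ce_diff) simp
    then show ?thesis by (simp only: sum_list_0)
  qed
  finally show "TD_delta sB Delta phi psi (n + 1) (CE_d sB phi psi n f) gs c = 0" .
qed

end
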